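(* Let $f:X\to\mathcal G$ be a convex function and $x,u\in X$. Define $g:(0,+\infty)\to\mathcal G$ by $g(t)=\frac1t\big(f(x+tu)\ominus f(x)\big)$. Then for all $0<s\le t$ it holds $g(s)\supseteq g(t)$.
   Context: $X$ is a real linear space, $Z$ a real locally convex Hausdorff space, $C\subseteq Z$ a closed convex cone with $0\in C$ and nontrivial $C^-=\{z^*\in Z^*: z^*(c)\le 0\ \forall c\in C\}$. $\mathcal G=\{A\subseteq Z: A=\operatorname{cl}\operatorname{co}(A+C)\}$; $A\oplus B=\operatorname{cl}\{a+b: a\in A, b\in B\}$, $tA=\{ta: a\in A\}$ ($t>0$), $A\ominus B=\{z\in Z: B+\{z\}\subseteq A\}$. $f$ is convex if $f(tx_1+(1-t)x_2)\supseteq tf(x_1)\oplus(1-t)f(x_2)$ for all $x_1,x_2\in X$, $t\in(0,1)$. *)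

theory Defs
  imports "HOL-Analysis.Analysis"
begin

text \<open>Z is a real locally convex Hausdorff topological vector space. Hausdorffness is the
type class t2_space; the remaining axioms are collected in this predicate.\<close>
definition locally_convex_tvs :: "('z::{real_vector,t2_space}) itself \<Rightarrow> bool" where
  "locally_convex_tvs _ \<longleftrightarrow>
     continuous_on UNIV (\<lambda>p::'z \<times> 'z. fst p + snd p) \<and>
     continuous_on UNIV (\<lambda>p::real \<times> 'z. fst p *\<^sub>R snd p) \<and>
     (\<forall>U::'z set. open U \<and> 0 \<in> U \<longrightarrow> (\<exists>V. open V \<and> 0 \<in> V \<and> convex V \<and> V \<subseteq> U))"

definition dual_space :: "('z::{real_vector,topological_space} \<Rightarrow> real) set" where
  "dual_space = {zs. linear zs \<and> continuous_on UNIV zs}"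

definition neg_dual_cone :: "'z::{real_vector,topological_space} set \<Rightarrow> ('z \<Rightarrow> real) set" where
  "neg_dual_cone C = {zs \<in> dual_space. \<forall>c\<in>C. zs c \<le> 0}"

definition msum :: "'z::real_vector set \<Rightarrow> 'z set \<Rightarrow> 'z set" where
  "msum A B = {a + b | a b. a \<in> A \<and> b \<in> B}"

definition Gsp :: "'z::{real_vector,topological_space} set \<Rightarrow> 'z set set" where
  "Gsp C = {A. A = closure (convex hull (msum A C))}"

definition oplus :: "'z::{real_vector,topological_space} set \<Rightarrow> 'z set \<Rightarrow> 'z set" where
  "oplus A B = closure (msum A B)"

definition smul_set :: "real \<Rightarrow> 'z::real_vector set \<Rightarrow> 'z set" where
  "smul_set t A = (\<lambda>a. t *\<^sub>R a) ` A"

definition ominus :: "'z::real_vector set \<Rightarrow> 'z set \<Rightarrow> 'z set" where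
  "ominus A B = {z. (\<lambda>b. b + z) ` B \<subseteq> A}"

definition convex_setval :: "('x::real_vector \<Rightarrow> 'z::{real_vector,topological_space} set) \<Rightarrow> bool" where
  "convex_setval f \<longleftrightarrow>
     (\<forall>x1 x2 t. 0 < t \<and> t < 1 \<longrightarrow>
        oplus (smul_set t (f x1)) (smul_set (1 - t) (f x2)) \<subseteq> f (t *\<^sub>R x1 + (1 - t) *\<^sub>R x2))"

end

theory Submission
  imports Defs
begin

text \<open>If \<open>b \<in> f x\<close> and \<open>b + w \<in> f (x + v)\<close>, then convexity of \<open>f\<close> on the segment from \<open>x\<close> to
\<open>x + v\<close> puts \<open>\<lambda>(b + w) + (1 - \<lambda>) b = b + \<lambda>w\<close> into \<open>f (x + \<lambda>v)\<close>; take \<open>v = t u\<close>, \<open>\<lambda> = s / t\<close>.\<close>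

lemma convex_setval_combination:
  assumes "convex_setval f" "0 < l" "l < 1" "a \<in> f y1" "b \<in> f y2"
  shows "l *\<^sub>R a + (1 - l) *\<^sub>R b \<in> f (l *\<^sub>R y1 + (1 - l) *\<^sub>R y2)"
proof -
  have "l *\<^sub>R a + (1 - l) *\<^sub>R b \<in> msum (smul_set l (f y1)) (smul_set (1 - l) (f y2))"
    unfolding msum_def smul_set_def using assms(4,5) by blast
  then have "l *\<^sub>R a + (1 - l) *\<^sub>R b \<in> oplus (smul_set l (f y1)) (smul_set (1 - l) (f y2))"
    unfolding oplus_def using closure_subset by blast
  then show ?thesis
    using assms(1-3) unfolding convex_setval_def by blast
qed

lemma convex_setval_ominus_scaleR:
  assumes f: "convex_setval f" and l: "0 < l" "l \<le> 1"
    and w: "w \<in> ominus (f (x + v)) (f x)"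
  shows "l *\<^sub>R w \<in> ominus (f (x + l *\<^sub>R v)) (f x)"
proof (cases "l = 1")
  case True
  then show ?thesis using w by simp
next
  case False
  have "b + l *\<^sub>R w \<in> f (x + l *\<^sub>R v)" if b: "b \<in> f x" for b
  proof -
    have "b + w \<in> f (x + v)" using w b by (auto simp: ominus_def)
    then have "l *\<^sub>R (b + w) + (1 - l) *\<^sub>R b \<in> f (l *\<^sub>R (x + v) + (1 - l) *\<^sub>R x)"
      using convex_setval_combination[OF f] l False b by simp
    then show ?thesis by (simp add: algebra_simps)
  qed
  then show ?thesis by (auto simp: ominus_def)
qed

theorem mainTheorem7:
  fixes f :: "'x::real_vector \<Rightarrow> 'z::{real_vector,t2_space} set"
    and C :: "'z set" and x u :: 'x and s t :: real
  assumes Z: "locally_convex_tvs TYPE('z)"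
    and C_closed: "closed C" and C_convex: "convex C" and C_cone: "cone C" and C_zero: "0 \<in> C"
    and C_dual: "neg_dual_cone C \<noteq> {\<lambda>z. 0}"
    and f_G: "\<forall>y. f y \<in> Gsp C"
    and f_convex: "convex_setval f"
    and g_def: "g = (\<lambda>r. smul_set (1 / r) (ominus (f (x + r *\<^sub>R u)) (f x)))"
    and st: "0 < s" "s \<le> t"
  shows "g t \<subseteq> g s"
proof
  fix z assume "z \<in> g t"
  then obtain w where z: "z = (1 / t) *\<^sub>R w" and w: "w \<in> ominus (f (x + t *\<^sub>R u)) (f x)"
    by (auto simp: g_def smul_set_def)
  have "(s / t) *\<^sub>R w \<in> ominus (f (x + s *\<^sub>R u)) (f x)"
    using convex_setval_ominus_scaleR[OF f_convex _ _ w, of "s / t"] st by simp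
  moreover have "z = (1 / s) *\<^sub>R ((s / t) *\<^sub>R w)" using z st by simp
  ultimately show "z \<in> g s" unfolding g_def smul_set_def by blast
qed

end
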